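(* If $\mathbb V\in\mathrm{Rep}(Q,\mathbb{F}_1)$ is indecomposable, then every $\Phi=(\phi_i)_{i\in I}\in\mathrm{End}(\mathbb V)$ is either nilpotent or an isomorphism.
   Context: $\mathrm{Vect}_{\mathbb{F}_1}$: finite pointed sets $(V,0_V)$ with pointed maps injective on the complement of the preimage of the base point. $\mathrm{Rep}(Q,\mathbb{F}_1)$: representations $\mathbb V=(V_i,f_h)$ of a quiver $Q$ (vertices $I$, edges $E$) with $V_i\in\mathrm{Vect}_{\mathbb{F}_1}$ and $f_h:V_{h'}\to V_{h''}$ morphisms, morphisms being families of morphisms commuting with edge maps. Direct sums are taken vertexwise, where $V\oplus W$ is $V\sqcup W$ with base points identified. $\mathbb V$ is indecomposable if it is nonzero and cannot be written as $\mathbb U\oplus\mathbb W$ with $\mathbb U,\mathbb W\ne0$. An endomorphism $T$ of $V\in\mathrm{Vect}_{\mathbb{F}_1}$ is nilpotent if $T^n$ maps everything to $0_V$ for some $n$; $\Phi=(\phi_i)$ is nilpotent if every $\phi_i$ is nilpotent. *)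

theory Defs
  imports Main
begin

definition quiver :: "'i set \<Rightarrow> 'e set \<Rightarrow> ('e \<Rightarrow> 'i) \<Rightarrow> ('e \<Rightarrow> 'i) \<Rightarrow> bool" where
  "quiver I E s t \<longleftrightarrow> finite I \<and> finite E \<and> (\<forall>h\<in>E. s h \<in> I \<and> t h \<in> I)"

definition vect_f1 :: "'a set \<Rightarrow> 'a \<Rightarrow> bool" where
  "vect_f1 V z \<longleftrightarrow> finite V \<and> z \<in> V"

definition f1_mor :: "'a set \<Rightarrow> 'a \<Rightarrow> 'a set \<Rightarrow> 'a \<Rightarrow> ('a \<Rightarrow> 'a) \<Rightarrow> bool" where
  "f1_mor V z W w f \<longleftrightarrow> f ` V \<subseteq> W \<and> f z = w \<and> inj_on f {x \<in> V. f x \<noteq> w}"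

definition f1_rep :: "'i set \<Rightarrow> 'e set \<Rightarrow> ('e \<Rightarrow> 'i) \<Rightarrow> ('e \<Rightarrow> 'i) \<Rightarrow>
    ('i \<Rightarrow> 'a set) \<Rightarrow> ('i \<Rightarrow> 'a) \<Rightarrow> ('e \<Rightarrow> 'a \<Rightarrow> 'a) \<Rightarrow> bool" where
  "f1_rep I E s t V z f \<longleftrightarrow> (\<forall>i\<in>I. vect_f1 (V i) (z i)) \<and>
     (\<forall>h\<in>E. f1_mor (V (s h)) (z (s h)) (V (t h)) (z (t h)) (f h))"

definition f1_rep_end :: "'i set \<Rightarrow> 'e set \<Rightarrow> ('e \<Rightarrow> 'i) \<Rightarrow> ('e \<Rightarrow> 'i) \<Rightarrow>
    ('i \<Rightarrow> 'a set) \<Rightarrow> ('i \<Rightarrow> 'a) \<Rightarrow> ('e \<Rightarrow> 'a \<Rightarrow> 'a) \<Rightarrow> ('i \<Rightarrow> 'a \<Rightarrow> 'a) \<Rightarrow> bool" where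
  "f1_rep_end I E s t V z f \<Phi> \<longleftrightarrow> (\<forall>i\<in>I. f1_mor (V i) (z i) (V i) (z i) (\<Phi> i)) \<and>
     (\<forall>h\<in>E. \<forall>x\<in>V (s h). \<Phi> (t h) (f h x) = f h (\<Phi> (s h) x))"

definition f1_rep_nonzero :: "'i set \<Rightarrow> ('i \<Rightarrow> 'a set) \<Rightarrow> ('i \<Rightarrow> 'a) \<Rightarrow> bool" where
  "f1_rep_nonzero I V z \<longleftrightarrow> (\<exists>i\<in>I. V i \<noteq> {z i})"

definition f1_subrep :: "'i set \<Rightarrow> 'e set \<Rightarrow> ('e \<Rightarrow> 'i) \<Rightarrow> ('e \<Rightarrow> 'i) \<Rightarrow>
    ('i \<Rightarrow> 'a set) \<Rightarrow> ('i \<Rightarrow> 'a) \<Rightarrow> ('e \<Rightarrow> 'a \<Rightarrow> 'a) \<Rightarrow> ('i \<Rightarrow> 'a set) \<Rightarrow> bool" where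
  "f1_subrep I E s t V z f U \<longleftrightarrow> (\<forall>i\<in>I. z i \<in> U i \<and> U i \<subseteq> V i) \<and>
     (\<forall>h\<in>E. f h ` U (s h) \<subseteq> U (t h))"

text \<open>Direct sum decomposition V = U \<oplus> W (vertexwise union with only the base point in common),
  U and W both nonzero.\<close>
definition f1_rep_decomposable :: "'i set \<Rightarrow> 'e set \<Rightarrow> ('e \<Rightarrow> 'i) \<Rightarrow> ('e \<Rightarrow> 'i) \<Rightarrow>
    ('i \<Rightarrow> 'a set) \<Rightarrow> ('i \<Rightarrow> 'a) \<Rightarrow> ('e \<Rightarrow> 'a \<Rightarrow> 'a) \<Rightarrow> bool" where
  "f1_rep_decomposable I E s t V z f \<longleftrightarrow> (\<exists>U W.
     f1_subrep I E s t V z f U \<and> f1_subrep I E s t V z f W \<and>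
     (\<forall>i\<in>I. U i \<union> W i = V i \<and> U i \<inter> W i = {z i}) \<and>
     f1_rep_nonzero I U z \<and> f1_rep_nonzero I W z)"

definition f1_rep_indecomposable :: "'i set \<Rightarrow> 'e set \<Rightarrow> ('e \<Rightarrow> 'i) \<Rightarrow> ('e \<Rightarrow> 'i) \<Rightarrow>
    ('i \<Rightarrow> 'a set) \<Rightarrow> ('i \<Rightarrow> 'a) \<Rightarrow> ('e \<Rightarrow> 'a \<Rightarrow> 'a) \<Rightarrow> bool" where
  "f1_rep_indecomposable I E s t V z f \<longleftrightarrow>
     f1_rep_nonzero I V z \<and> \<not> f1_rep_decomposable I E s t V z f"

definition f1_nilpotent :: "'i set \<Rightarrow> ('i \<Rightarrow> 'a set) \<Rightarrow> ('i \<Rightarrow> 'a) \<Rightarrow> ('i \<Rightarrow> 'a \<Rightarrow> 'a) \<Rightarrow> bool" where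
  "f1_nilpotent I V z \<Phi> \<longleftrightarrow> (\<forall>i\<in>I. \<exists>n. \<forall>x\<in>V i. (\<Phi> i ^^ n) x = z i)"

definition f1_rep_iso :: "'i set \<Rightarrow> 'e set \<Rightarrow> ('e \<Rightarrow> 'i) \<Rightarrow> ('e \<Rightarrow> 'i) \<Rightarrow>
    ('i \<Rightarrow> 'a set) \<Rightarrow> ('i \<Rightarrow> 'a) \<Rightarrow> ('e \<Rightarrow> 'a \<Rightarrow> 'a) \<Rightarrow> ('i \<Rightarrow> 'a \<Rightarrow> 'a) \<Rightarrow> bool" where
  "f1_rep_iso I E s t V z f \<Phi> \<longleftrightarrow> f1_rep_end I E s t V z f \<Phi> \<and>
     (\<exists>\<Psi>. f1_rep_end I E s t V z f \<Psi> \<and>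
       (\<forall>i\<in>I. \<forall>x\<in>V i. \<Psi> i (\<Phi> i x) = x \<and> \<Phi> i (\<Psi> i x) = x))"

end

theory Submission
  imports Defs
begin

(* Fitting's lemma over F1.
   For an endomorphism phi of a finite pointed set V (in Vect_F1) and N >= |V|,
   every point either is sent to the base point by phi^N or lies on a cycle of phi.
   Hence V is the direct sum (union meeting only in the base point) of
   ker phi^N = {x. phi^N x = 0} and im phi^N, and phi is bijective as soon as
   ker phi^N is trivial.
   For an endomorphism Phi of a quiver representation the vertexwise kernels and
   images of Phi^N are subrepresentations (Phi commutes with the edge maps), so
   they decompose the representation. Indecomposability forces one summand to be
   zero: a zero image means Phi is nilpotent, a zero kernel means every component
   is bijective, and the inverses again form an endomorphism, so Phi is an
   isomorphism. *)

section \<open>Morphisms of pointed sets\<close>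

lemma f1_mor_id: "f1_mor V z V z id"
  by (simp add: f1_mor_def)

lemma f1_mor_comp:
  assumes f: "f1_mor U u V v f" and g: "f1_mor V v W w g"
  shows "f1_mor U u W w (g \<circ> f)"
  unfolding f1_mor_def
proof (intro conjI)
  show "(g \<circ> f) ` U \<subseteq> W" "(g \<circ> f) u = w"
    using f g by (auto simp: f1_mor_def)
  show "inj_on (g \<circ> f) {x \<in> U. (g \<circ> f) x \<noteq> w}"
  proof (rule inj_onI)
    fix x y assume x: "x \<in> {x \<in> U. (g \<circ> f) x \<noteq> w}" and y: "y \<in> {x \<in> U. (g \<circ> f) x \<noteq> w}"
      and eq: "(g \<circ> f) x = (g \<circ> f) y"
    \<comment> \<open>a point not killed by g \<circ> f is not killed by f, since g maps the base point to w\<close>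
    have "f x \<noteq> v" "f y \<noteq> v" using x y g by (auto simp: f1_mor_def)
    moreover have "f x \<in> V" "f y \<in> V" using x y f by (auto simp: f1_mor_def)
    ultimately have "f x = f y"
      using g eq x y by (auto simp: f1_mor_def inj_on_def)
    then show "x = y" using f x y \<open>f x \<noteq> v\<close> by (auto simp: f1_mor_def inj_on_def)
  qed
qed

lemma funpow_intertwine:
  assumes comm: "\<forall>x\<in>A. P (g x) = g (Q x)" and inv: "Q ` A \<subseteq> A" and x: "x \<in> A"
  shows "(P ^^ k) (g x) = g ((Q ^^ k) x)"
  using x
proof (induction k arbitrary: x)
  case 0 then show ?case by simp
next
  case (Suc k)
  have "(P ^^ Suc k) (g x) = (P ^^ k) (g (Q x))"
    using comm Suc.prems by (simp add: funpow_Suc_right del: funpow.simps)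
  also have "\<dots> = g ((Q ^^ k) (Q x))" using Suc inv by blast
  finally show ?case by (simp add: funpow_Suc_right del: funpow.simps)
qed

section \<open>Endomorphisms of a finite pointed set\<close>

locale f1_endo =
  fixes V :: "'a set" and z :: 'a and \<phi> :: "'a \<Rightarrow> 'a"
  assumes space: "vect_f1 V z" and mor: "f1_mor V z V z \<phi>"
begin

lemma finite_space: "finite V" and base_in: "z \<in> V"
  using space by (auto simp: vect_f1_def)

lemma iter_mor: "f1_mor V z V z (\<phi> ^^ k)"
proof (induction k)
  case 0 then show ?case using f1_mor_id by (simp add: id_def)
next
  case (Suc k)
  then show ?case using f1_mor_comp[OF mor Suc] by (simp only: funpow_Suc_right)
qed

lemma iter_in: "x \<in> V \<Longrightarrow> (\<phi> ^^ k) x \<in> V"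
  and iter_base: "(\<phi> ^^ k) z = z"
  using iter_mor[of k] by (auto simp: f1_mor_def)

lemma iter_cancel:
  "\<lbrakk>x \<in> V; y \<in> V; (\<phi> ^^ k) x = (\<phi> ^^ k) y; (\<phi> ^^ k) x \<noteq> z\<rbrakk> \<Longrightarrow> x = y"
  using iter_mor[of k] by (auto simp: f1_mor_def inj_on_def)

lemma iter_split: "a \<le> n \<Longrightarrow> (\<phi> ^^ n) x = (\<phi> ^^ (n - a)) ((\<phi> ^^ a) x)"
  by (metis comp_apply funpow_add le_add_diff_inverse2)

text \<open>By pigeonhole two of the points \<open>\<phi>\<^sup>0 x, \<dots>, \<phi>\<^sup>N x\<close> coincide; if they are not the base
  point, the injectivity of \<open>\<phi>\<^sup>a\<close> off its kernel lets us cancel.\<close>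

lemma killed_or_periodic:
  assumes x: "x \<in> V" and N: "card V \<le> N"
  shows "(\<phi> ^^ N) x = z \<or> (\<exists>c>0. (\<phi> ^^ c) x = x)"
proof -
  let ?orbit = "\<lambda>k. (\<phi> ^^ k) x"
  have "\<not> inj_on ?orbit {..N}"
  proof
    assume "inj_on ?orbit {..N}"
    moreover have "?orbit ` {..N} \<subseteq> V" using iter_in x by auto
    ultimately have "card {..N} \<le> card V" using card_inj_on_le finite_space by blast
    then show False using N by simp
  qed
  then obtain a b where ab: "a < b" "b \<le> N" "?orbit a = ?orbit b"
    by (auto simp: inj_on_def) (metis linorder_neqE_nat)
  show ?thesis
  proof (cases "?orbit a = z")
    case True
    then have "(\<phi> ^^ N) x = z" using iter_split[of a N x] iter_base ab by simp
    then show ?thesis ..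
  next
    case False
    have "?orbit b = (\<phi> ^^ a) ((\<phi> ^^ (b - a)) x)"
      using iter_split[of "b - a" b x] ab by simp
    then have "x = (\<phi> ^^ (b - a)) x"
      using iter_cancel[OF x iter_in[OF x], of a "b - a"] ab False by simp
    then show ?thesis using ab by (metis zero_less_diff)
  qed
qed

lemma periodic_iter: "(\<phi> ^^ c) x = x \<Longrightarrow> (\<phi> ^^ (c * m)) x = x"
  by (induction m) (simp_all add: funpow_add)

lemma periodic_not_killed:
  assumes c: "0 < c" "(\<phi> ^^ c) x = x" and killed: "(\<phi> ^^ k) x = z"
  shows "x = z"
proof -
  have "k \<le> c * k" using c by simp
  then have "(\<phi> ^^ (c * k)) x = z"
    using iter_split[of k "c * k" x] killed iter_base by simp
  then show ?thesis using periodic_iter[OF c(2)] by simp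
qed

lemma periodic_in_image:
  assumes x: "x \<in> V" and c: "0 < c" "(\<phi> ^^ c) x = x"
  shows "x \<in> (\<phi> ^^ k) ` V"
proof -
  have "k \<le> c * k" using c by simp
  then have "x = (\<phi> ^^ k) ((\<phi> ^^ (c * k - k)) x)"
    using iter_split[of "c * k - k" "c * k" x] periodic_iter[OF c(2)] by simp
  then show ?thesis using iter_in[OF x] by blast
qed

lemma fitting_decomposition:
  assumes N: "card V \<le> N"
  shows "{x \<in> V. (\<phi> ^^ N) x = z} \<union> (\<phi> ^^ N) ` V = V"
    and "{x \<in> V. (\<phi> ^^ N) x = z} \<inter> (\<phi> ^^ N) ` V = {z}"
proof -
  have cover: "(\<phi> ^^ N) x = z \<or> x \<in> (\<phi> ^^ N) ` V" if x: "x \<in> V" for x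
    using killed_or_periodic[OF x N] periodic_in_image[OF x] by auto
  show "{x \<in> V. (\<phi> ^^ N) x = z} \<union> (\<phi> ^^ N) ` V = V"
  proof
    show "{x \<in> V. (\<phi> ^^ N) x = z} \<union> (\<phi> ^^ N) ` V \<subseteq> V" using iter_in by auto
    show "V \<subseteq> {x \<in> V. (\<phi> ^^ N) x = z} \<union> (\<phi> ^^ N) ` V" using cover by auto
  qed
  have trivial: "(\<phi> ^^ N) x = z" if x: "x \<in> V" and killed: "(\<phi> ^^ N) ((\<phi> ^^ N) x) = z" for x
  proof (rule ccontr)
    assume "(\<phi> ^^ N) x \<noteq> z"
    then obtain c where "0 < c" "(\<phi> ^^ c) x = x" using killed_or_periodic[OF x N] by auto
    moreover have "(\<phi> ^^ (N + N)) x = z" using killed by (simp add: funpow_add)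
    ultimately have "x = z" by (rule periodic_not_killed)
    then show False using \<open>(\<phi> ^^ N) x \<noteq> z\<close> iter_base by simp
  qed
  show "{x \<in> V. (\<phi> ^^ N) x = z} \<inter> (\<phi> ^^ N) ` V = {z}"
  proof
    show "{x \<in> V. (\<phi> ^^ N) x = z} \<inter> (\<phi> ^^ N) ` V \<subseteq> {z}" using trivial by auto
    show "{z} \<subseteq> {x \<in> V. (\<phi> ^^ N) x = z} \<inter> (\<phi> ^^ N) ` V"
      using base_in iter_base by (auto intro: image_eqI[of z _ z])
  qed
qed

lemma bij_if_trivial_kernel:
  assumes n: "0 < n" and ker: "{x \<in> V. (\<phi> ^^ n) x = z} = {z}"
  shows "bij_betw \<phi> V V"
proof -
  have kernel_phi: "w = z" if "w \<in> V" "\<phi> w = z" for w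
  proof -
    have "(\<phi> ^^ n) w = (\<phi> ^^ (n - 1)) (\<phi> w)"
      using iter_split[of 1 n w] n by simp
    then show ?thesis using that ker iter_base by auto
  qed
  have "inj_on \<phi> V"
  proof (rule inj_onI)
    fix x y assume xy: "x \<in> V" "y \<in> V" "\<phi> x = \<phi> y"
    show "x = y"
    proof (cases "\<phi> x = z")
      case True then show ?thesis using xy kernel_phi by metis
    next
      case False then show ?thesis using mor xy by (auto simp: f1_mor_def inj_on_def)
    qed
  qed
  moreover have "\<phi> ` V \<subseteq> V" using mor by (simp add: f1_mor_def)
  ultimately show ?thesis using endo_inj_surj[OF finite_space] by (simp add: bij_betw_def)
qed

end

section \<open>Endomorphisms of representations\<close>

lemma f1_rep_end_component:
  assumes "f1_rep I E s t V z f" "f1_rep_end I E s t V z f \<Phi>" "i \<in> I"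
  shows "f1_endo (V i) (z i) (\<Phi> i)"
  using assms by (auto simp: f1_endo_def f1_rep_def f1_rep_end_def)

definition iter_kernel :: "('i \<Rightarrow> 'a set) \<Rightarrow> ('i \<Rightarrow> 'a) \<Rightarrow> ('i \<Rightarrow> 'a \<Rightarrow> 'a) \<Rightarrow> nat \<Rightarrow> 'i \<Rightarrow> 'a set"
  where "iter_kernel V z \<Phi> n i = {x \<in> V i. (\<Phi> i ^^ n) x = z i}"

definition iter_image :: "('i \<Rightarrow> 'a set) \<Rightarrow> ('i \<Rightarrow> 'a \<Rightarrow> 'a) \<Rightarrow> nat \<Rightarrow> 'i \<Rightarrow> 'a set"
  where "iter_image V \<Phi> n i = (\<Phi> i ^^ n) ` V i"

text \<open>Powers of an endomorphism commute with the edge maps, so their kernels and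
  images are subrepresentations.\<close>

lemma f1_rep_end_iter_commute:
  assumes quiv: "quiver I E s t"
    and end_\<Phi>: "f1_rep_end I E s t V z f \<Phi>" and h: "h \<in> E" and x: "x \<in> V (s h)"
  shows "(\<Phi> (t h) ^^ n) (f h x) = f h ((\<Phi> (s h) ^^ n) x)"
proof (rule funpow_intertwine[OF _ _ x])
  show "\<forall>x\<in>V (s h). \<Phi> (t h) (f h x) = f h (\<Phi> (s h) x)"
    using end_\<Phi> h by (simp add: f1_rep_end_def)
  have "s h \<in> I" using quiv h by (simp add: quiver_def)
  then show "\<Phi> (s h) ` V (s h) \<subseteq> V (s h)"
    using end_\<Phi> by (simp add: f1_rep_end_def f1_mor_def)
qed

lemma iter_kernel_subrep:
  assumes quiv: "quiver I E s t" and rep: "f1_rep I E s t V z f"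
    and end_\<Phi>: "f1_rep_end I E s t V z f \<Phi>"
  shows "f1_subrep I E s t V z f (iter_kernel V z \<Phi> n)"
  unfolding f1_subrep_def
proof (intro conjI ballI)
  fix i assume "i \<in> I"
  then interpret f1_endo "V i" "z i" "\<Phi> i" by (rule f1_rep_end_component[OF rep end_\<Phi>])
  show "z i \<in> iter_kernel V z \<Phi> n i" "iter_kernel V z \<Phi> n i \<subseteq> V i"
    using base_in iter_base by (auto simp: iter_kernel_def)
next
  fix h assume h: "h \<in> E"
  have fh: "f h ` V (s h) \<subseteq> V (t h)" "f h (z (s h)) = z (t h)"
    using rep h by (simp_all add: f1_rep_def f1_mor_def)
  show "f h ` iter_kernel V z \<Phi> n (s h) \<subseteq> iter_kernel V z \<Phi> n (t h)"
  proof
    fix y assume "y \<in> f h ` iter_kernel V z \<Phi> n (s h)"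
    then obtain x where x: "x \<in> V (s h)" "(\<Phi> (s h) ^^ n) x = z (s h)" "y = f h x"
      by (auto simp: iter_kernel_def)
    then have "(\<Phi> (t h) ^^ n) y = z (t h)"
      using f1_rep_end_iter_commute[OF quiv end_\<Phi> h x(1)] fh(2) by simp
    then show "y \<in> iter_kernel V z \<Phi> n (t h)" using fh(1) x by (auto simp: iter_kernel_def)
  qed
qed

lemma iter_image_subrep:
  assumes quiv: "quiver I E s t" and rep: "f1_rep I E s t V z f"
    and end_\<Phi>: "f1_rep_end I E s t V z f \<Phi>"
  shows "f1_subrep I E s t V z f (iter_image V \<Phi> n)"
  unfolding f1_subrep_def
proof (intro conjI ballI)
  fix i assume "i \<in> I"
  then interpret f1_endo "V i" "z i" "\<Phi> i" by (rule f1_rep_end_component[OF rep end_\<Phi>])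
  show "z i \<in> iter_image V \<Phi> n i" using base_in iter_base[symmetric]
    by (auto simp: iter_image_def)
  show "iter_image V \<Phi> n i \<subseteq> V i" using iter_in by (auto simp: iter_image_def)
next
  fix h assume h: "h \<in> E"
  have fh: "f h ` V (s h) \<subseteq> V (t h)"
    using rep h by (simp add: f1_rep_def f1_mor_def)
  show "f h ` iter_image V \<Phi> n (s h) \<subseteq> iter_image V \<Phi> n (t h)"
  proof
    fix y assume "y \<in> f h ` iter_image V \<Phi> n (s h)"
    then obtain x where x: "x \<in> V (s h)" "y = f h ((\<Phi> (s h) ^^ n) x)"
      by (auto simp: iter_image_def)
    then have "y = (\<Phi> (t h) ^^ n) (f h x)"
      using f1_rep_end_iter_commute[OF quiv end_\<Phi> h] by simp
    then show "y \<in> iter_image V \<Phi> n (t h)" using fh x by (auto simp: iter_image_def)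
  qed
qed

lemma indecomposable_fitting:
  assumes quiv: "quiver I E s t" and rep: "f1_rep I E s t V z f"
    and indec: "f1_rep_indecomposable I E s t V z f"
    and end_\<Phi>: "f1_rep_end I E s t V z f \<Phi>"
    and N: "\<forall>i\<in>I. card (V i) \<le> N"
  shows "(\<forall>i\<in>I. iter_kernel V z \<Phi> N i = {z i}) \<or> (\<forall>i\<in>I. iter_image V \<Phi> N i = {z i})"
proof -
  have "\<forall>i\<in>I. iter_kernel V z \<Phi> N i \<union> iter_image V \<Phi> N i = V i \<and>
      iter_kernel V z \<Phi> N i \<inter> iter_image V \<Phi> N i = {z i}"
  proof
    fix i assume i: "i \<in> I"
    interpret f1_endo "V i" "z i" "\<Phi> i" by (rule f1_rep_end_component[OF rep end_\<Phi> i])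
    show "iter_kernel V z \<Phi> N i \<union> iter_image V \<Phi> N i = V i \<and>
        iter_kernel V z \<Phi> N i \<inter> iter_image V \<Phi> N i = {z i}"
      using fitting_decomposition N i by (simp add: iter_kernel_def iter_image_def)
  qed
  with indec iter_kernel_subrep[OF quiv rep end_\<Phi>] iter_image_subrep[OF quiv rep end_\<Phi>]
  have "\<not> (f1_rep_nonzero I (iter_kernel V z \<Phi> N) z \<and> f1_rep_nonzero I (iter_image V \<Phi> N) z)"
    unfolding f1_rep_indecomposable_def f1_rep_decomposable_def by blast
  then show ?thesis by (auto simp: f1_rep_nonzero_def)
qed

text \<open>An endomorphism whose components are all bijective is an isomorphism: the
  componentwise inverses again commute with the edge maps.\<close>

lemma f1_rep_iso_if_bij:
  assumes quiv: "quiver I E s t" and rep: "f1_rep I E s t V z f"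
    and end_\<Phi>: "f1_rep_end I E s t V z f \<Phi>"
    and bij: "\<forall>i\<in>I. bij_betw (\<Phi> i) (V i) (V i)"
  shows "f1_rep_iso I E s t V z f \<Phi>"
proof -
  define \<Psi> where "\<Psi> i = inv_into (V i) (\<Phi> i)" for i
  have left: "\<Psi> i (\<Phi> i x) = x" and right: "\<Phi> i (\<Psi> i x) = x"
    and bij_\<Psi>: "bij_betw (\<Psi> i) (V i) (V i)" if "i \<in> I" "x \<in> V i" for i x
    using bij that by (auto simp: \<Psi>_def bij_betw_inv_into_left bij_betw_inv_into_right
        bij_betw_inv_into)
  have "f1_rep_end I E s t V z f \<Psi>"
    unfolding f1_rep_end_def f1_mor_def
  proof (intro conjI ballI)
    fix i assume i: "i \<in> I"
    then interpret f1_endo "V i" "z i" "\<Phi> i" by (rule f1_rep_end_component[OF rep end_\<Phi>])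
    show "\<Psi> i ` V i \<subseteq> V i" "inj_on (\<Psi> i) {x \<in> V i. \<Psi> i x \<noteq> z i}"
      using bij_\<Psi>[OF i base_in] by (auto simp: bij_betw_def inj_on_def)
    show "\<Psi> i (z i) = z i" using left[OF i base_in] iter_base[of 1] by simp
  next
    fix h x assume h: "h \<in> E" and x: "x \<in> V (s h)"
    have st: "s h \<in> I" "t h \<in> I" using quiv h by (auto simp: quiver_def)
    define y where "y = \<Psi> (s h) x"
    have y: "y \<in> V (s h)" "\<Phi> (s h) y = x"
      using bij_\<Psi>[OF st(1) x] right[OF st(1) x] x by (auto simp: y_def bij_betw_def)
    have "f h x = \<Phi> (t h) (f h y)" using end_\<Phi> h y by (auto simp: f1_rep_end_def)
    moreover have "f h y \<in> V (t h)" using rep h y by (auto simp: f1_rep_def f1_mor_def)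
    ultimately show "\<Psi> (t h) (f h x) = f h (\<Psi> (s h) x)"
      using left[OF st(2)] y_def by simp
  qed
  then show ?thesis unfolding f1_rep_iso_def using end_\<Phi> left right by blast
qed

theorem mainTheorem5:
  fixes I :: "'i set" and E :: "'e set" and s t :: "'e \<Rightarrow> 'i"
    and V :: "'i \<Rightarrow> 'a set" and z :: "'i \<Rightarrow> 'a" and f :: "'e \<Rightarrow> 'a \<Rightarrow> 'a"
    and \<Phi> :: "'i \<Rightarrow> 'a \<Rightarrow> 'a"
  assumes "quiver I E s t"
    and "f1_rep I E s t V z f"
    and "f1_rep_indecomposable I E s t V z f"
    and "f1_rep_end I E s t V z f \<Phi>"
  shows "f1_nilpotent I V z \<Phi> \<or> f1_rep_iso I E s t V z f \<Phi>"
proof -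
  define N where "N = Suc (\<Sum>i\<in>I. card (V i))"
  have "finite I" using assms(1) by (simp add: quiver_def)
  then have N_bound: "\<forall>i\<in>I. card (V i) \<le> N"
    unfolding N_def by (metis le_SucI member_le_sum zero_le)
  consider "\<forall>i\<in>I. iter_kernel V z \<Phi> N i = {z i}" | "\<forall>i\<in>I. iter_image V \<Phi> N i = {z i}"
    using indecomposable_fitting[OF assms N_bound] by blast
  then show ?thesis
  proof cases
    case 1
    have "\<forall>i\<in>I. bij_betw (\<Phi> i) (V i) (V i)"
      using 1 f1_endo.bij_if_trivial_kernel[OF f1_rep_end_component[OF assms(2,4)], of _ N]
      by (simp add: N_def iter_kernel_def)
    then show ?thesis using f1_rep_iso_if_bij[OF assms(1,2,4)] by blast
  next
    case 2
    then show ?thesis by (auto simp: f1_nilpotent_def iter_image_def)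
  qed
qed

end
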